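(* Let $\mathbf A$ be an additive category, ${\tt G}$ a digraph, $P\subseteq SG({\tt G})$ a squared and faithful sub-poset, and $\epsilon$ a sign assignment on $P$. For any covariant functor $\mathcal F\colon\mathbf P\to\mathbf A$ define \[C^n_{\mathcal F}(P)=\bigoplus_{{\tt H}\in P,\ \ell({\tt H})=n}\mathcal F({\tt H}),\qquad d^n=\sum_{{\tt H}\in P,\ \ell({\tt H})=n}\ \sum_{{\tt H}'\in P,\ {\tt H}\prec{\tt H}'}(-1)^{\epsilon({\tt H},{\tt H}')}\mathcal F({\tt H}\prec{\tt H}').\] Then $d^n\circ d^{n-1}=0$ for every $n\in\mathbb N$; in particular $(C^*_{\mathcal F}(P),d^* )$ is a cochain complex.
   Context: A digraph ${\tt G}=(V,E)$ has finite $V$ and $E\subseteq(V\times V)\setminus\{(v,v)\}$. $SG({\tt G})$ is the poset of all subgraphs ${\tt H}$ of ${\tt G}$ ($V({\tt H})\subseteq V({\tt G})$, $E({\tt H})\subseteq E({\tt G})$, ${\tt H}$ a digraph) ordered by being a proper subgraph. For a poset, $x\,\tilde\triangleleft\,y$ ($y$ covers $x$) means $x\triangleleft y$ with no $z$ strictly between. A sub-poset $S'$ of $S$ (with induced order) is faithful if its covering relation equals the restriction to $S'$ of the covering relation of $S$; it is squared if for any $x,y,z\in S'$ with $x\,\tilde\triangleleft\,y\,\tilde\triangleleft\,z$ there is a unique $y'\neq y$ with $x\,\tilde\triangleleft\,y'\,\tilde\triangleleft\,z$ (such $x,y,y',z$ form a square). A sign assignment on a poset is a choice of $\epsilon_{x,y}\in\mathbb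 Z_2$ for each covering pair $x\,\tilde\triangleleft\,y$ such that $\epsilon_{x,y}+\epsilon_{y,z}\equiv\epsilon_{x,y'}+\epsilon_{y',z}+1\pmod 2$ for every square. In the formulas, ${\tt H}\prec{\tt H}'$ denotes the covering relation in $P$. The level of ${\tt H}\in P$ is $\ell({\tt H})=\#E({\tt H})+\#V({\tt H})-\min\{\#E({\tt H}')+\#V({\tt H}')\mid{\tt H}'\in P\}$. $\mathbf P$ is the category with objects the elements of $P$ and a unique morphism $x\to y$ iff $x\le y$. *)

theory Defs
  imports "HOL-Algebra.FiniteProduct" "HOL-Library.Z2"
begin

type_synonym 'v digraph = "'v set \<times> ('v \<times> 'v) set"

definition is_digraph :: "'v digraph \<Rightarrow> bool" where
  "is_digraph H \<longleftrightarrow> finite (fst H) \<and> snd H \<subseteq> fst H \<times> fst H \<and> (\<forall>v. (v, v) \<notin> snd H)"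

definition SG :: "'v digraph \<Rightarrow> 'v digraph set" where
  "SG G = {H. is_digraph H \<and> fst H \<subseteq> fst G \<and> snd H \<subseteq> snd G}"

definition subgraph_le :: "'v digraph \<Rightarrow> 'v digraph \<Rightarrow> bool" where
  "subgraph_le H H' \<longleftrightarrow> fst H \<subseteq> fst H' \<and> snd H \<subseteq> snd H'"

definition subgraph_lt :: "'v digraph \<Rightarrow> 'v digraph \<Rightarrow> bool" where
  "subgraph_lt H H' \<longleftrightarrow> subgraph_le H H' \<and> H \<noteq> H'"

definition covers_in :: "'v digraph set \<Rightarrow> 'v digraph \<Rightarrow> 'v digraph \<Rightarrow> bool" where
  "covers_in S x y \<longleftrightarrow> x \<in> S \<and> y \<in> S \<and> subgraph_lt x y \<and>
     \<not> (\<exists>z\<in>S. subgraph_lt x z \<and> subgraph_lt z y)"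

definition faithful :: "'v digraph \<Rightarrow> 'v digraph set \<Rightarrow> bool" where
  "faithful G P \<longleftrightarrow> P \<subseteq> SG G \<and>
     (\<forall>x\<in>P. \<forall>y\<in>P. covers_in P x y \<longleftrightarrow> covers_in (SG G) x y)"

definition squared :: "'v digraph set \<Rightarrow> bool" where
  "squared P \<longleftrightarrow> (\<forall>x\<in>P. \<forall>y\<in>P. \<forall>z\<in>P. covers_in P x y \<and> covers_in P y z \<longrightarrow>
     (\<exists>!y'. y' \<in> P \<and> y' \<noteq> y \<and> covers_in P x y' \<and> covers_in P y' z))"

definition sign_assignment :: "'v digraph set \<Rightarrow> ('v digraph \<Rightarrow> 'v digraph \<Rightarrow> bit) \<Rightarrow> bool" where
  "sign_assignment P eps \<longleftrightarrow>
     (\<forall>x y y' z. covers_in P x y \<and> covers_in P y z \<and> covers_in P x y' \<and> covers_in P y' z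
        \<and> y \<noteq> y' \<longrightarrow> eps x y + eps y z = eps x y' + eps y' z + 1)"

definition level :: "'v digraph set \<Rightarrow> 'v digraph \<Rightarrow> nat" where
  "level P H = card (snd H) + card (fst H) - Min ((\<lambda>H'. card (snd H') + card (fst H')) ` P)"

text \<open>A category with objects Ob, Hom-sets Hom a b, composition cmp g f (= g after f)
  and identities idm. Each Hom-set is an abelian group under ad with neutral
  element zr a b.\<close>

definition homgrp :: "('o \<Rightarrow> 'o \<Rightarrow> 'm set) \<Rightarrow> ('m \<Rightarrow> 'm \<Rightarrow> 'm) \<Rightarrow> ('o \<Rightarrow> 'o \<Rightarrow> 'm)
    \<Rightarrow> 'o \<Rightarrow> 'o \<Rightarrow> 'm monoid" where
  "homgrp Hom ad zr a b = \<lparr>carrier = Hom a b, monoid.mult = ad, one = zr a b\<rparr>"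

definition is_category ::
  "'o set \<Rightarrow> ('o \<Rightarrow> 'o \<Rightarrow> 'm set) \<Rightarrow> ('m \<Rightarrow> 'm \<Rightarrow> 'm) \<Rightarrow> ('o \<Rightarrow> 'm) \<Rightarrow> bool" where
  "is_category Ob Hom cmp idm \<longleftrightarrow>
     (\<forall>a\<in>Ob. \<forall>b\<in>Ob. \<forall>a'\<in>Ob. \<forall>b'\<in>Ob. (a, b) \<noteq> (a', b') \<longrightarrow> Hom a b \<inter> Hom a' b' = {}) \<and>
     (\<forall>a\<in>Ob. \<forall>b\<in>Ob. \<forall>c\<in>Ob. \<forall>f\<in>Hom a b. \<forall>g\<in>Hom b c. cmp g f \<in> Hom a c) \<and>
     (\<forall>a\<in>Ob. \<forall>b\<in>Ob. \<forall>c\<in>Ob. \<forall>d\<in>Ob. \<forall>f\<in>Hom a b. \<forall>g\<in>Hom b c. \<forall>h\<in>Hom c d.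
        cmp h (cmp g f) = cmp (cmp h g) f) \<and>
     (\<forall>a\<in>Ob. idm a \<in> Hom a a) \<and>
     (\<forall>a\<in>Ob. \<forall>b\<in>Ob. \<forall>f\<in>Hom a b. cmp f (idm a) = f \<and> cmp (idm b) f = f)"

definition is_preadditive ::
  "'o set \<Rightarrow> ('o \<Rightarrow> 'o \<Rightarrow> 'm set) \<Rightarrow> ('m \<Rightarrow> 'm \<Rightarrow> 'm) \<Rightarrow> ('o \<Rightarrow> 'm)
    \<Rightarrow> ('m \<Rightarrow> 'm \<Rightarrow> 'm) \<Rightarrow> ('o \<Rightarrow> 'o \<Rightarrow> 'm) \<Rightarrow> bool" where
  "is_preadditive Ob Hom cmp idm ad zr \<longleftrightarrow>
     is_category Ob Hom cmp idm \<and>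
     (\<forall>a\<in>Ob. \<forall>b\<in>Ob. comm_group (homgrp Hom ad zr a b)) \<and>
     (\<forall>a\<in>Ob. \<forall>b\<in>Ob. \<forall>c\<in>Ob. \<forall>f\<in>Hom a b. \<forall>f'\<in>Hom a b. \<forall>g\<in>Hom b c.
        cmp g (ad f f') = ad (cmp g f) (cmp g f')) \<and>
     (\<forall>a\<in>Ob. \<forall>b\<in>Ob. \<forall>c\<in>Ob. \<forall>f\<in>Hom a b. \<forall>g\<in>Hom b c. \<forall>g'\<in>Hom b c.
        cmp (ad g g') f = ad (cmp g f) (cmp g' f))"

definition additive_category ::
  "'o set \<Rightarrow> ('o \<Rightarrow> 'o \<Rightarrow> 'm set) \<Rightarrow> ('m \<Rightarrow> 'm \<Rightarrow> 'm) \<Rightarrow> ('o \<Rightarrow> 'm)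
    \<Rightarrow> ('m \<Rightarrow> 'm \<Rightarrow> 'm) \<Rightarrow> ('o \<Rightarrow> 'o \<Rightarrow> 'm) \<Rightarrow> bool" where
  "additive_category Ob Hom cmp idm ad zr \<longleftrightarrow>
     is_preadditive Ob Hom cmp idm ad zr \<and>
     (\<exists>z\<in>Ob. idm z = zr z z) \<and>
     (\<forall>a\<in>Ob. \<forall>b\<in>Ob. \<exists>c\<in>Ob. \<exists>i1\<in>Hom a c. \<exists>i2\<in>Hom b c. \<exists>p1\<in>Hom c a. \<exists>p2\<in>Hom c b.
        cmp p1 i1 = idm a \<and> cmp p2 i2 = idm b \<and> cmp p1 i2 = zr b a \<and>
        cmp p2 i1 = zr a b \<and> ad (cmp i1 p1) (cmp i2 p2) = idm c)"

text \<open>Finite sums in a Hom-set, and multiplication by the sign (-1)^e, e in Z2.\<close>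
definition homsum :: "('o \<Rightarrow> 'o \<Rightarrow> 'm set) \<Rightarrow> ('m \<Rightarrow> 'm \<Rightarrow> 'm) \<Rightarrow> ('o \<Rightarrow> 'o \<Rightarrow> 'm)
    \<Rightarrow> 'o \<Rightarrow> 'o \<Rightarrow> ('i \<Rightarrow> 'm) \<Rightarrow> 'i set \<Rightarrow> 'm" where
  "homsum Hom ad zr a b f I = finprod (homgrp Hom ad zr a b) f I"

definition signed :: "('o \<Rightarrow> 'o \<Rightarrow> 'm set) \<Rightarrow> ('m \<Rightarrow> 'm \<Rightarrow> 'm) \<Rightarrow> ('o \<Rightarrow> 'o \<Rightarrow> 'm)
    \<Rightarrow> 'o \<Rightarrow> 'o \<Rightarrow> bit \<Rightarrow> 'm \<Rightarrow> 'm" where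
  "signed Hom ad zr a b e f = (if e = 0 then f else inv\<^bsub>homgrp Hom ad zr a b\<^esub> f)"

definition poset_functor ::
  "'v digraph set \<Rightarrow> 'o set \<Rightarrow> ('o \<Rightarrow> 'o \<Rightarrow> 'm set) \<Rightarrow> ('m \<Rightarrow> 'm \<Rightarrow> 'm) \<Rightarrow> ('o \<Rightarrow> 'm)
    \<Rightarrow> ('v digraph \<Rightarrow> 'o) \<Rightarrow> ('v digraph \<Rightarrow> 'v digraph \<Rightarrow> 'm) \<Rightarrow> bool" where
  "poset_functor P Ob Hom cmp idm Fo Fm \<longleftrightarrow>
     (\<forall>x\<in>P. Fo x \<in> Ob) \<and>
     (\<forall>x\<in>P. \<forall>y\<in>P. subgraph_le x y \<longrightarrow> Fm x y \<in> Hom (Fo x) (Fo y)) \<and>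
     (\<forall>x\<in>P. Fm x x = idm (Fo x)) \<and>
     (\<forall>x\<in>P. \<forall>y\<in>P. \<forall>z\<in>P. subgraph_le x y \<and> subgraph_le y z \<longrightarrow>
        cmp (Fm y z) (Fm x y) = Fm x z)"

text \<open>C is a biproduct (direct sum) of the family Fo H, H in P of level n, with
  injections iota and projections proj.\<close>
definition is_biproduct ::
  "('o \<Rightarrow> 'o \<Rightarrow> 'm set) \<Rightarrow> ('m \<Rightarrow> 'm \<Rightarrow> 'm) \<Rightarrow> ('o \<Rightarrow> 'm) \<Rightarrow> ('m \<Rightarrow> 'm \<Rightarrow> 'm) \<Rightarrow> ('o \<Rightarrow> 'o \<Rightarrow> 'm)
    \<Rightarrow> 'i set \<Rightarrow> ('i \<Rightarrow> 'o) \<Rightarrow> 'o \<Rightarrow> ('i \<Rightarrow> 'm) \<Rightarrow> ('i \<Rightarrow> 'm) \<Rightarrow> bool" where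
  "is_biproduct Hom cmp idm ad zr I X C iota proj \<longleftrightarrow>
     (\<forall>i\<in>I. iota i \<in> Hom (X i) C \<and> proj i \<in> Hom C (X i)) \<and>
     (\<forall>i\<in>I. cmp (proj i) (iota i) = idm (X i)) \<and>
     (\<forall>i\<in>I. \<forall>j\<in>I. i \<noteq> j \<longrightarrow> cmp (proj j) (iota i) = zr (X i) (X j)) \<and>
     homsum Hom ad zr C C (\<lambda>i. cmp (iota i) (proj i)) I = idm C"

definition level_set :: "'v digraph set \<Rightarrow> nat \<Rightarrow> 'v digraph set" where
  "level_set P n = {H \<in> P. level P H = n}"

text \<open>d^n = sum over H of level n, H' covering H in P, of
  (-1)^eps(H,H') F(H < H') (composed with the biproduct injection/projection).\<close>
definition differential ::
  "'v digraph set \<Rightarrow> ('o \<Rightarrow> 'o \<Rightarrow> 'm set) \<Rightarrow> ('m \<Rightarrow> 'm \<Rightarrow> 'm) \<Rightarrow> ('m \<Rightarrow> 'm \<Rightarrow> 'm) \<Rightarrow> ('o \<Rightarrow> 'o \<Rightarrow> 'm)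
    \<Rightarrow> ('v digraph \<Rightarrow> 'v digraph \<Rightarrow> bit) \<Rightarrow> ('v digraph \<Rightarrow> 'o) \<Rightarrow> ('v digraph \<Rightarrow> 'v digraph \<Rightarrow> 'm)
    \<Rightarrow> (nat \<Rightarrow> 'o) \<Rightarrow> (nat \<Rightarrow> 'v digraph \<Rightarrow> 'm) \<Rightarrow> (nat \<Rightarrow> 'v digraph \<Rightarrow> 'm) \<Rightarrow> nat \<Rightarrow> 'm" where
  "differential P Hom cmp ad zr eps Fo Fm C iota proj n =
     homsum Hom ad zr (C n) (C (Suc n))
       (\<lambda>H. homsum Hom ad zr (C n) (C (Suc n))
              (\<lambda>H'. cmp (iota (Suc n) H')
                      (cmp (signed Hom ad zr (Fo H) (Fo H') (eps H H') (Fm H H')) (proj n H)))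
              {H'. covers_in P H H'})
       (level_set P n)"

end

theory Submission
  imports Defs
begin

text \<open>Regard d n as a matrix between the biproducts C n and C (n + 1): its (H', H) entry is
  the signed map (-1)^eps(H, H') F(H < H') if H' covers H, and zero otherwise. In SG(G) a
  covering adds exactly one vertex or one edge, so in the faithful sub-poset P covering raises
  the level by exactly one. Hence the (K, H) entry of d (n + 1) d n is the sum, over all H'
  with H < H' < K, of F(H < K) with sign eps(H, H') + eps(H', K). As P is squared there are
  either no such H' or exactly two, and on those two the sign assignment takes opposite
  values, so every entry vanishes.\<close>

section \<open>Preadditive categories\<close>

lemma hom_finprod:
  assumes "comm_group G" "comm_group H" "h \<in> hom G H" "f \<in> A \<rightarrow> carrier G"
  shows "h (finprod G f A) = finprod H (h \<circ> f) A"
proof -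
  interpret G: comm_group G by fact
  interpret H: comm_group H by fact
  interpret group_hom G H h by unfold_locales fact
  show ?thesis using assms(4)
    by (induction A rule: infinite_finite_induct) (auto simp: Pi_def)
qed

locale preadditive_category =
  fixes Ob :: "'o set" and Hom :: "'o \<Rightarrow> 'o \<Rightarrow> 'm set" and cmp :: "'m \<Rightarrow> 'm \<Rightarrow> 'm"
    and idm :: "'o \<Rightarrow> 'm" and ad :: "'m \<Rightarrow> 'm \<Rightarrow> 'm" and zr :: "'o \<Rightarrow> 'o \<Rightarrow> 'm"
  assumes preadditive: "is_preadditive Ob Hom cmp idm ad zr"
begin

abbreviation hom_group :: "'o \<Rightarrow> 'o \<Rightarrow> 'm monoid" where
  "hom_group \<equiv> homgrp Hom ad zr"

abbreviation hsum :: "'o \<Rightarrow> 'o \<Rightarrow> ('i \<Rightarrow> 'm) \<Rightarrow> 'i set \<Rightarrow> 'm" where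
  "hsum \<equiv> homsum Hom ad zr"

abbreviation sgn :: "'o \<Rightarrow> 'o \<Rightarrow> bit \<Rightarrow> 'm \<Rightarrow> 'm" where
  "sgn \<equiv> signed Hom ad zr"

lemma hom_group_simps [simp]:
  "carrier (hom_group a b) = Hom a b"
  "x \<otimes>\<^bsub>hom_group a b\<^esub> y = ad x y"
  "\<one>\<^bsub>hom_group a b\<^esub> = zr a b"
  by (simp_all add: homgrp_def)

lemma comm_group_hom_group: "a \<in> Ob \<Longrightarrow> b \<in> Ob \<Longrightarrow> comm_group (hom_group a b)"
  using preadditive unfolding is_preadditive_def by blast

lemma category: "is_category Ob Hom cmp idm"
  using preadditive unfolding is_preadditive_def by blast

lemma comp_closed [intro]:
  "f \<in> Hom a b \<Longrightarrow> g \<in> Hom b c \<Longrightarrow> a \<in> Ob \<Longrightarrow> b \<in> Ob \<Longrightarrow> c \<in> Ob \<Longrightarrow> cmp g f \<in> Hom a c"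
  using category unfolding is_category_def by blast

lemma comp_assoc:
  "f \<in> Hom a b \<Longrightarrow> g \<in> Hom b c \<Longrightarrow> h \<in> Hom c d \<Longrightarrow> a \<in> Ob \<Longrightarrow> b \<in> Ob \<Longrightarrow> c \<in> Ob \<Longrightarrow> d \<in> Ob
   \<Longrightarrow> cmp h (cmp g f) = cmp (cmp h g) f"
  using category unfolding is_category_def by blast

lemma comp_id_left: "f \<in> Hom a b \<Longrightarrow> a \<in> Ob \<Longrightarrow> b \<in> Ob \<Longrightarrow> cmp (idm b) f = f"
  and comp_id_right: "f \<in> Hom a b \<Longrightarrow> a \<in> Ob \<Longrightarrow> b \<in> Ob \<Longrightarrow> cmp f (idm a) = f"
  using category unfolding is_category_def by blast+

lemma zero_closed [intro]: "a \<in> Ob \<Longrightarrow> b \<in> Ob \<Longrightarrow> zr a b \<in> Hom a b"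
  using comm_group.axioms(2)[OF comm_group_hom_group]
  by (metis hom_group_simps(1,3) group.is_monoid monoid.one_closed)

lemma group_hom_comp_left:
  assumes "g \<in> Hom b c" "a \<in> Ob" "b \<in> Ob" "c \<in> Ob"
  shows "group_hom (hom_group a b) (hom_group a c) (cmp g)"
  using assms preadditive comm_group_hom_group[of a b] comm_group_hom_group[of a c]
  unfolding group_hom_def group_hom_axioms_def hom_def is_preadditive_def
  by (auto simp: comm_group.axioms(2))

lemma group_hom_comp_right:
  assumes "f \<in> Hom a b" "a \<in> Ob" "b \<in> Ob" "c \<in> Ob"
  shows "group_hom (hom_group b c) (hom_group a c) (\<lambda>g. cmp g f)"
  using assms preadditive comm_group_hom_group[of b c] comm_group_hom_group[of a c]
  unfolding group_hom_def group_hom_axioms_def hom_def is_preadditive_def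
  by (auto simp: comm_group.axioms(2))

lemma comp_zero_left: "g \<in> Hom b c \<Longrightarrow> a \<in> Ob \<Longrightarrow> b \<in> Ob \<Longrightarrow> c \<in> Ob \<Longrightarrow> cmp g (zr a b) = zr a c"
  using group_hom.hom_one[OF group_hom_comp_left] by simp

lemma comp_zero_right: "f \<in> Hom a b \<Longrightarrow> a \<in> Ob \<Longrightarrow> b \<in> Ob \<Longrightarrow> c \<in> Ob \<Longrightarrow> cmp (zr b c) f = zr a c"
  using group_hom.hom_one[OF group_hom_comp_right] by simp

lemma homsum_closed [intro]:
  "(\<And>i. i \<in> I \<Longrightarrow> f i \<in> Hom a b) \<Longrightarrow> a \<in> Ob \<Longrightarrow> b \<in> Ob \<Longrightarrow> hsum a b f I \<in> Hom a b"
  using comm_monoid.finprod_closed[OF comm_group.axioms(1)[OF comm_group_hom_group], of a b f I]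
  by (auto simp: homsum_def)

lemma comp_homsum_left:
  assumes "\<And>i. i \<in> I \<Longrightarrow> f i \<in> Hom a b" "g \<in> Hom b c" "a \<in> Ob" "b \<in> Ob" "c \<in> Ob"
  shows "cmp g (hsum a b f I) = hsum a c (\<lambda>i. cmp g (f i)) I"
proof -
  interpret group_hom "hom_group a b" "hom_group a c" "cmp g"
    using assms by (intro group_hom_comp_left)
  show ?thesis
    using hom_finprod[OF comm_group_hom_group[of a b] comm_group_hom_group[of a c] homh, of f I] assms
    by (auto simp: homsum_def comp_def)
qed

lemma comp_homsum_right:
  assumes "\<And>i. i \<in> I \<Longrightarrow> g i \<in> Hom b c" "f \<in> Hom a b" "a \<in> Ob" "b \<in> Ob" "c \<in> Ob"
  shows "cmp (hsum b c g I) f = hsum a c (\<lambda>i. cmp (g i) f) I"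
proof -
  interpret group_hom "hom_group b c" "hom_group a c" "\<lambda>g. cmp g f"
    using assms by (intro group_hom_comp_right)
  show ?thesis
    using hom_finprod[OF comm_group_hom_group[of b c] comm_group_hom_group[of a c] homh, of g I] assms
    by (auto simp: homsum_def comp_def)
qed

lemma homsum_cong:
  assumes "\<And>i. i \<in> I \<Longrightarrow> f i = g i" "\<And>i. i \<in> I \<Longrightarrow> g i \<in> Hom a b" "a \<in> Ob" "b \<in> Ob"
  shows "hsum a b f I = hsum a b g I"
  using comm_monoid.finprod_cong'[OF comm_group.axioms(1)[OF comm_group_hom_group], of a b I I g f] assms
  by (auto simp: homsum_def)

lemma homsum_zero:
  assumes "\<And>i. i \<in> I \<Longrightarrow> f i = zr a b" "a \<in> Ob" "b \<in> Ob"
  shows "hsum a b f I = zr a b"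
  using comm_monoid.finprod_one_eqI[OF comm_group.axioms(1)[OF comm_group_hom_group], of a b I f] assms
  by (auto simp: homsum_def)

lemma homsum_delta:
  assumes "finite I" "k \<in> I" "x \<in> Hom a b" "a \<in> Ob" "b \<in> Ob"
  shows "hsum a b (\<lambda>i. if i = k then x else zr a b) I = x"
  using comm_monoid.finprod_singleton_swap[OF comm_group.axioms(1)[OF comm_group_hom_group],
      of a b k I "\<lambda>_. x"] assms
  by (simp add: homsum_def cong: if_cong)

lemma homsum_restrict:
  assumes "finite I" "J \<subseteq> I" "\<And>i. i \<in> J \<Longrightarrow> f i \<in> Hom a b" "a \<in> Ob" "b \<in> Ob"
  shows "hsum a b (\<lambda>i. if i \<in> J then f i else zr a b) I = hsum a b f J"
proof -
  interpret comm_group "hom_group a b" using assms by (intro comm_group_hom_group)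
  have "(\<lambda>i. if i \<in> J then f i else zr a b) \<in> I \<rightarrow> Hom a b" using assms by auto
  then show ?thesis
    using finprod_mono_neutral_cong_right[of I J "\<lambda>i. if i \<in> J then f i else zr a b" f] assms
    by (auto simp: homsum_def)
qed

lemma homsum_pair:
  assumes "y \<noteq> y'" "f y \<in> Hom a b" "f y' \<in> Hom a b" "a \<in> Ob" "b \<in> Ob"
  shows "hsum a b f {y, y'} = ad (f y) (f y')"
proof -
  interpret comm_group "hom_group a b" using assms by (intro comm_group_hom_group)
  show ?thesis using assms r_one[of "f y'"] by (simp add: homsum_def)
qed

lemma comp_signed:
  assumes "f \<in> Hom a b" "g \<in> Hom b c" "a \<in> Ob" "b \<in> Ob" "c \<in> Ob"
  shows "cmp (sgn b c e g) (sgn a b e' f) = sgn a c (e + e') (cmp g f)"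
proof -
  interpret bc: comm_group "hom_group b c" using assms by (intro comm_group_hom_group)
  interpret ac: comm_group "hom_group a c" using assms by (intro comm_group_hom_group)
  have inv_left: "cmp g' (inv\<^bsub>hom_group a b\<^esub> f') = inv\<^bsub>hom_group a c\<^esub> (cmp g' f')"
    if "f' \<in> Hom a b" "g' \<in> Hom b c" for f' g'
    using group_hom.hom_inv[OF group_hom_comp_left[of g' b c a]] that assms by simp
  have inv_right: "cmp (inv\<^bsub>hom_group b c\<^esub> g') f' = inv\<^bsub>hom_group a c\<^esub> (cmp g' f')"
    if "f' \<in> Hom a b" "g' \<in> Hom b c" for f' g'
    using group_hom.hom_inv[OF group_hom_comp_right[of f' a b c]] that assms by simp
  have "cmp g f \<in> Hom a c" using assms by blast
  then have "cmp (inv\<^bsub>hom_group b c\<^esub> g) (inv\<^bsub>hom_group a b\<^esub> f) = cmp g f"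
    using assms bc.inv_closed[of g] ac.inv_inv[of "cmp g f"] by (simp add: inv_left inv_right)
  then show ?thesis using assms
    by (cases e; cases e') (auto simp: signed_def inv_left inv_right)
qed

lemma signed_closed [intro]: "f \<in> Hom a b \<Longrightarrow> a \<in> Ob \<Longrightarrow> b \<in> Ob \<Longrightarrow> sgn a b e f \<in> Hom a b"
  using group.inv_closed[OF comm_group.axioms(2)[OF comm_group_hom_group]]
  by (auto simp: signed_def)

lemma signed_opposite_cancel:
  assumes "f \<in> Hom a b" "a \<in> Ob" "b \<in> Ob"
  shows "ad (sgn a b (e + 1) f) (sgn a b e f) = zr a b"
proof -
  interpret comm_group "hom_group a b" using assms by (intro comm_group_hom_group)
  show ?thesis using assms l_inv[of f] r_inv[of f] by (cases e) (auto simp: signed_def)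
qed

end

section \<open>Finite biproducts\<close>

locale finite_biproduct = preadditive_category Ob Hom cmp idm ad zr
  for Ob :: "'o set" and Hom :: "'o \<Rightarrow> 'o \<Rightarrow> 'm set" and cmp :: "'m \<Rightarrow> 'm \<Rightarrow> 'm"
    and idm :: "'o \<Rightarrow> 'm" and ad :: "'m \<Rightarrow> 'm \<Rightarrow> 'm" and zr :: "'o \<Rightarrow> 'o \<Rightarrow> 'm" +
  fixes I :: "'i set" and X :: "'i \<Rightarrow> 'o" and B :: 'o and \<iota> :: "'i \<Rightarrow> 'm" and \<pi> :: "'i \<Rightarrow> 'm"
  assumes finite_index: "finite I"
    and biproduct_object [simp]: "B \<in> Ob"
    and summand_object [simp]: "i \<in> I \<Longrightarrow> X i \<in> Ob"
    and biproduct: "is_biproduct Hom cmp idm ad zr I X B \<iota> \<pi>"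
begin

lemma iota_closed [intro]: "i \<in> I \<Longrightarrow> \<iota> i \<in> Hom (X i) B"
  and proj_closed [intro]: "i \<in> I \<Longrightarrow> \<pi> i \<in> Hom B (X i)"
  and homsum_iota_proj: "hsum B B (\<lambda>i. cmp (\<iota> i) (\<pi> i)) I = idm B"
  using biproduct unfolding is_biproduct_def by auto

lemma proj_iota:
  "i \<in> I \<Longrightarrow> j \<in> I \<Longrightarrow> cmp (\<pi> j) (\<iota> i) = (if i = j then idm (X i) else zr (X i) (X j))"
  using biproduct unfolding is_biproduct_def by auto

lemma hom_from_biproduct_eq_homsum:
  assumes "f \<in> Hom B b" "b \<in> Ob"
  shows "f = hsum B b (\<lambda>i. cmp (cmp f (\<iota> i)) (\<pi> i)) I"
proof -
  have "f = cmp f (hsum B B (\<lambda>i. cmp (\<iota> i) (\<pi> i)) I)"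
    using assms by (simp add: homsum_iota_proj comp_id_right)
  also have "\<dots> = hsum B b (\<lambda>i. cmp f (cmp (\<iota> i) (\<pi> i))) I"
    using assms by (intro comp_homsum_left) auto
  also have "\<dots> = hsum B b (\<lambda>i. cmp (cmp f (\<iota> i)) (\<pi> i)) I"
    using assms by (intro homsum_cong) (auto intro: comp_assoc intro!: comp_closed)
  finally show ?thesis .
qed

lemma hom_into_biproduct_eq_homsum:
  assumes "g \<in> Hom a B" "a \<in> Ob"
  shows "g = hsum a B (\<lambda>i. cmp (\<iota> i) (cmp (\<pi> i) g)) I"
proof -
  have "g = cmp (hsum B B (\<lambda>i. cmp (\<iota> i) (\<pi> i)) I) g"
    using assms by (simp add: homsum_iota_proj comp_id_left)
  also have "\<dots> = hsum a B (\<lambda>i. cmp (cmp (\<iota> i) (\<pi> i)) g) I"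
    using assms by (intro comp_homsum_right) auto
  also have "\<dots> = hsum a B (\<lambda>i. cmp (\<iota> i) (cmp (\<pi> i) g)) I"
    using assms by (intro homsum_cong) (auto intro: comp_assoc[symmetric] intro!: comp_closed)
  finally show ?thesis .
qed

lemma hom_from_biproduct_eqI:
  assumes "f \<in> Hom B b" "f' \<in> Hom B b" "b \<in> Ob" "\<And>i. i \<in> I \<Longrightarrow> cmp f (\<iota> i) = cmp f' (\<iota> i)"
  shows "f = f'"
proof -
  have "f = hsum B b (\<lambda>i. cmp (cmp f (\<iota> i)) (\<pi> i)) I"
    using assms(1,3) by (rule hom_from_biproduct_eq_homsum)
  also have "\<dots> = hsum B b (\<lambda>i. cmp (cmp f' (\<iota> i)) (\<pi> i)) I"
    using assms by (intro homsum_cong) (auto intro!: comp_closed)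
  also have "\<dots> = f'"
    using assms by (intro hom_from_biproduct_eq_homsum[symmetric])
  finally show ?thesis .
qed

lemma hom_into_biproduct_eqI:
  assumes "g \<in> Hom a B" "g' \<in> Hom a B" "a \<in> Ob" "\<And>i. i \<in> I \<Longrightarrow> cmp (\<pi> i) g = cmp (\<pi> i) g'"
  shows "g = g'"
proof -
  have "g = hsum a B (\<lambda>i. cmp (\<iota> i) (cmp (\<pi> i) g)) I"
    using assms(1,3) by (rule hom_into_biproduct_eq_homsum)
  also have "\<dots> = hsum a B (\<lambda>i. cmp (\<iota> i) (cmp (\<pi> i) g')) I"
    using assms by (intro homsum_cong) (auto intro!: comp_closed)
  also have "\<dots> = g'"
    using assms by (intro hom_into_biproduct_eq_homsum[symmetric])
  finally show ?thesis .
qed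

lemma proj_comp_homsum:
  assumes "k \<in> I" "J \<subseteq> I" "\<And>j. j \<in> J \<Longrightarrow> h j \<in> Hom a (X j)" "a \<in> Ob"
  shows "cmp (\<pi> k) (hsum a B (\<lambda>j. cmp (\<iota> j) (h j)) J) = (if k \<in> J then h k else zr a (X k))"
proof -
  have "cmp (\<pi> k) (hsum a B (\<lambda>j. cmp (\<iota> j) (h j)) J)
      = hsum a (X k) (\<lambda>j. cmp (\<pi> k) (cmp (\<iota> j) (h j))) J"
    using assms by (intro comp_homsum_left) (auto intro!: comp_closed)
  also have "\<dots> = hsum a (X k) (\<lambda>j. if j = k then h k else zr a (X k)) J"
  proof (intro homsum_cong)
    fix j assume "j \<in> J"
    with assms have "cmp (\<pi> k) (cmp (\<iota> j) (h j)) = cmp (cmp (\<pi> k) (\<iota> j)) (h j)"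
      by (intro comp_assoc[of "h j" a "X j" "\<iota> j" B "\<pi> k" "X k"]) auto
    with \<open>j \<in> J\<close> assms show "cmp (\<pi> k) (cmp (\<iota> j) (h j)) = (if j = k then h k else zr a (X k))"
      by (auto simp: proj_iota comp_id_left[of "h k" a "X k"] comp_zero_right)
  qed (use assms in auto)
  also have "\<dots> = (if k \<in> J then h k else zr a (X k))"
    using assms finite_subset[OF _ finite_index] by (auto intro: homsum_delta homsum_zero)
  finally show ?thesis .
qed

lemma homsum_comp_iota:
  assumes "k \<in> I" "\<And>i. i \<in> I \<Longrightarrow> g i \<in> Hom (X i) b" "b \<in> Ob"
  shows "cmp (hsum B b (\<lambda>i. cmp (g i) (\<pi> i)) I) (\<iota> k) = g k"
proof -
  have "cmp (hsum B b (\<lambda>i. cmp (g i) (\<pi> i)) I) (\<iota> k)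
      = hsum (X k) b (\<lambda>i. cmp (cmp (g i) (\<pi> i)) (\<iota> k)) I"
    using assms by (intro comp_homsum_right) (auto intro!: comp_closed)
  also have "\<dots> = hsum (X k) b (\<lambda>i. if i = k then g k else zr (X k) b) I"
  proof (intro homsum_cong)
    fix i assume "i \<in> I"
    with assms have "cmp (cmp (g i) (\<pi> i)) (\<iota> k) = cmp (g i) (cmp (\<pi> i) (\<iota> k))"
      by (intro comp_assoc[of "\<iota> k" "X k" B "\<pi> i" "X i" "g i" b, symmetric]) auto
    with \<open>i \<in> I\<close> assms show "cmp (cmp (g i) (\<pi> i)) (\<iota> k) = (if i = k then g k else zr (X k) b)"
      by (auto simp: proj_iota comp_id_right[of "g k" "X k" b] comp_zero_left)
  qed (use assms in auto)
  also have "\<dots> = g k"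
    using assms finite_index by (intro homsum_delta) auto
  finally show ?thesis .
qed

lemma comp_entry_homsum:
  assumes "q \<in> Hom x a" "f \<in> Hom a B" "g \<in> Hom B c" "p \<in> Hom c y"
    and "x \<in> Ob" "a \<in> Ob" "c \<in> Ob" "y \<in> Ob"
  shows "cmp p (cmp (cmp g f) q)
    = hsum x y (\<lambda>i. cmp (cmp p (cmp g (\<iota> i))) (cmp (\<pi> i) (cmp f q))) I"
proof -
  have "cmp (cmp g f) q = cmp g (cmp f q)"
    using assms by (intro comp_assoc[of q x a f B g c, symmetric]) auto
  also have "\<dots> = cmp g (hsum x B (\<lambda>i. cmp (\<iota> i) (cmp (\<pi> i) (cmp f q))) I)"
    using assms by (subst hom_into_biproduct_eq_homsum[of "cmp f q" x]) (auto intro!: comp_closed)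
  also have "\<dots> = hsum x c (\<lambda>i. cmp g (cmp (\<iota> i) (cmp (\<pi> i) (cmp f q)))) I"
    using assms by (intro comp_homsum_left) (auto intro!: comp_closed)
  also have "\<dots> = hsum x c (\<lambda>i. cmp (cmp g (\<iota> i)) (cmp (\<pi> i) (cmp f q))) I"
  proof (intro homsum_cong)
    fix i assume "i \<in> I"
    with assms show "cmp g (cmp (\<iota> i) (cmp (\<pi> i) (cmp f q)))
        = cmp (cmp g (\<iota> i)) (cmp (\<pi> i) (cmp f q))"
      by (intro comp_assoc[of _ x "X i" "\<iota> i" B g c]) (auto intro!: comp_closed)
  qed (use assms in \<open>auto intro!: comp_closed\<close>)
  finally have "cmp p (cmp (cmp g f) q)
      = cmp p (hsum x c (\<lambda>i. cmp (cmp g (\<iota> i)) (cmp (\<pi> i) (cmp f q))) I)" by simp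
  also have "\<dots> = hsum x y (\<lambda>i. cmp p (cmp (cmp g (\<iota> i)) (cmp (\<pi> i) (cmp f q)))) I"
    using assms by (intro comp_homsum_left) (auto intro!: comp_closed)
  also have "\<dots> = hsum x y (\<lambda>i. cmp (cmp p (cmp g (\<iota> i))) (cmp (\<pi> i) (cmp f q))) I"
  proof (intro homsum_cong)
    fix i assume "i \<in> I"
    with assms show "cmp p (cmp (cmp g (\<iota> i)) (cmp (\<pi> i) (cmp f q)))
        = cmp (cmp p (cmp g (\<iota> i))) (cmp (\<pi> i) (cmp f q))"
      by (intro comp_assoc[of _ x "X i" "cmp g (\<iota> i)" c p y]) (auto intro!: comp_closed)
  qed (use assms in \<open>auto intro!: comp_closed\<close>)
  finally show ?thesis .
qed

end

section \<open>Coverings in subgraph posets\<close>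

definition digraph_size :: "'v digraph \<Rightarrow> nat" where
  "digraph_size H = card (snd H) + card (fst H)"

lemma finite_digraph: "is_digraph H \<Longrightarrow> finite (fst H) \<and> finite (snd H)"
  unfolding is_digraph_def by (meson finite_SigmaI finite_subset)

lemma finite_SG:
  assumes "is_digraph G"
  shows "finite (SG G)"
proof -
  have "finite (fst G)" "finite (snd G)"
    using finite_digraph[OF assms] by auto
  moreover have "SG G \<subseteq> Pow (fst G) \<times> Pow (snd G)"
    unfolding SG_def by auto
  ultimately show ?thesis
    by (meson finite_Pow_iff finite_SigmaI finite_subset)
qed

lemma covers_in_between_eq:
  "covers_in S x y \<Longrightarrow> z \<in> S \<Longrightarrow> subgraph_le x z \<Longrightarrow> subgraph_lt z y \<Longrightarrow> z = x"
  unfolding covers_in_def subgraph_lt_def by blast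

text \<open>Deleting from y one edge not in x, or, if there is none, one vertex not in x, yields a
  subgraph between x and y, which therefore is x.\<close>

lemma covers_SG_size:
  assumes cov: "covers_in (SG G) x y"
  shows "digraph_size y = Suc (digraph_size x)"
proof -
  have x: "x \<in> SG G" and y: "y \<in> SG G" and "subgraph_lt x y"
    using cov unfolding covers_in_def by auto
  then have V: "fst x \<subseteq> fst y" and E: "snd x \<subseteq> snd y" and "x \<noteq> y"
    unfolding subgraph_lt_def subgraph_le_def by auto
  have fin: "finite (fst y)" "finite (snd y)"
    using y finite_digraph[of y] by (auto simp: SG_def)
  show ?thesis
  proof (cases "snd x = snd y")
    case False
    then obtain e where e: "e \<in> snd y" "e \<notin> snd x" using E by auto
    define z where "z = (fst y, snd y - {e})"
    have "z \<in> SG G" using y by (auto simp: SG_def is_digraph_def z_def)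
    moreover have "subgraph_le x z" using V E e by (auto simp: subgraph_le_def z_def)
    moreover have "subgraph_lt z y"
    proof -
      have "subgraph_le z y" by (auto simp: subgraph_le_def z_def)
      moreover have "z \<noteq> y" using e by (metis z_def Diff_iff insertI1 snd_conv)
      ultimately show ?thesis by (simp add: subgraph_lt_def)
    qed
    ultimately have "z = x" by (rule covers_in_between_eq[OF cov])
    then have "fst x = fst y" "snd y = insert e (snd x)" using e by (auto simp: z_def)
    then show ?thesis using e fin by (simp add: digraph_size_def)
  next
    case True
    with \<open>x \<noteq> y\<close> have "fst x \<noteq> fst y" by (simp add: prod_eq_iff)
    then obtain v where v: "v \<in> fst y" "v \<notin> fst x" using V by auto
    define z where "z = (fst y - {v}, snd y)"
    have "snd y \<subseteq> fst x \<times> fst x" using True x by (simp add: SG_def is_digraph_def)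
    then have "z \<in> SG G" using y v by (auto simp: SG_def is_digraph_def z_def)
    moreover have "subgraph_le x z" using V True v by (auto simp: subgraph_le_def z_def)
    moreover have "subgraph_lt z y"
    proof -
      have "subgraph_le z y" by (auto simp: subgraph_le_def z_def)
      moreover have "z \<noteq> y" using v by (metis z_def Diff_iff insertI1 fst_conv)
      ultimately show ?thesis by (simp add: subgraph_lt_def)
    qed
    ultimately have "z = x" by (rule covers_in_between_eq[OF cov])
    then have "snd x = snd y" "fst y = insert v (fst x)" using v by (auto simp: z_def)
    then show ?thesis using v fin by (simp add: digraph_size_def)
  qed
qed

lemma covers_level_Suc:
  assumes "is_digraph G" "faithful G P" "covers_in P x y"
  shows "level P y = Suc (level P x)"
proof -
  have P: "P \<subseteq> SG G" "x \<in> P" "y \<in> P"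
    using assms(2,3) unfolding faithful_def covers_in_def by auto
  then have "finite P" using finite_SG[OF assms(1)] finite_subset by blast
  then have "Min (digraph_size ` P) \<le> digraph_size x" using P by simp
  moreover have "digraph_size y = Suc (digraph_size x)"
    using assms(2,3) P by (intro covers_SG_size) (auto simp: faithful_def)
  ultimately show ?thesis
    by (simp add: level_def digraph_size_def[symmetric])
qed

lemma squared_middle_pair:
  assumes "squared P" "covers_in P x y" "covers_in P y z"
  obtains y' where "y' \<noteq> y" "{w. covers_in P x w \<and> covers_in P w z} = {y, y'}"
proof -
  have in_P: "covers_in P u w \<Longrightarrow> u \<in> P \<and> w \<in> P" for u w
    by (simp add: covers_in_def)
  then have "\<exists>!y'. y' \<in> P \<and> y' \<noteq> y \<and> covers_in P x y' \<and> covers_in P y' z"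
    using assms unfolding squared_def by blast
  then obtain y' where y': "y' \<noteq> y" "covers_in P x y'" "covers_in P y' z"
    and unique: "\<And>w. w \<in> P \<and> w \<noteq> y \<and> covers_in P x w \<and> covers_in P w z \<Longrightarrow> w = y'"
    by blast
  have "{w. covers_in P x w \<and> covers_in P w z} = {y, y'}"
    using assms(2,3) y' unique in_P by blast
  with \<open>y' \<noteq> y\<close> show thesis by (rule that)
qed

section \<open>The cochain complex of a functor on a squared sub-poset\<close>

locale subgraph_poset_complex = preadditive_category Ob Hom cmp idm ad zr
  for Ob :: "'o set" and Hom :: "'o \<Rightarrow> 'o \<Rightarrow> 'm set" and cmp :: "'m \<Rightarrow> 'm \<Rightarrow> 'm"
    and idm :: "'o \<Rightarrow> 'm" and ad :: "'m \<Rightarrow> 'm \<Rightarrow> 'm" and zr :: "'o \<Rightarrow> 'o \<Rightarrow> 'm" +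
  fixes G :: "'v digraph" and P :: "'v digraph set"
    and eps :: "'v digraph \<Rightarrow> 'v digraph \<Rightarrow> bit"
    and Fo :: "'v digraph \<Rightarrow> 'o" and Fm :: "'v digraph \<Rightarrow> 'v digraph \<Rightarrow> 'm"
    and C :: "nat \<Rightarrow> 'o" and iota :: "nat \<Rightarrow> 'v digraph \<Rightarrow> 'm" and proj :: "nat \<Rightarrow> 'v digraph \<Rightarrow> 'm"
  assumes digraph: "is_digraph G"
    and faithful: "faithful G P"
    and squared: "squared P"
    and sign_assignment: "sign_assignment P eps"
    and functoriality: "poset_functor P Ob Hom cmp idm Fo Fm"
    and cochain_biproduct:
      "\<And>n. C n \<in> Ob \<and> is_biproduct Hom cmp idm ad zr (level_set P n) Fo (C n) (iota n) (proj n)"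
begin

abbreviation cov :: "'v digraph \<Rightarrow> 'v digraph \<Rightarrow> bool" where
  "cov \<equiv> covers_in P"

abbreviation s :: "'v digraph \<Rightarrow> 'v digraph \<Rightarrow> 'm" where
  "s H H' \<equiv> sgn (Fo H) (Fo H') (eps H H') (Fm H H')"

abbreviation d :: "nat \<Rightarrow> 'm" where
  "d \<equiv> differential P Hom cmp ad zr eps Fo Fm C iota proj"

lemma finite_P: "finite P"
  using faithful finite_SG[OF digraph] unfolding faithful_def by (meson finite_subset)

lemma Fo_closed [simp]: "H \<in> P \<Longrightarrow> Fo H \<in> Ob"
  using functoriality unfolding poset_functor_def by blast

lemma C_closed [simp]: "C n \<in> Ob"
  using cochain_biproduct by blast

lemma level_set_Fo_closed [simp]: "H \<in> level_set P n \<Longrightarrow> Fo H \<in> Ob"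
  by (simp add: level_set_def)

lemma biproduct_level_set:
  "finite_biproduct Ob Hom cmp idm ad zr (level_set P n) Fo (C n) (iota n) (proj n)"
  by unfold_locales (use cochain_biproduct finite_P in \<open>auto simp: level_set_def\<close>)

lemma iota_closed [intro]: "H \<in> level_set P n \<Longrightarrow> iota n H \<in> Hom (Fo H) (C n)"
  by (rule finite_biproduct.iota_closed[OF biproduct_level_set])

lemma proj_closed [intro]: "H \<in> level_set P n \<Longrightarrow> proj n H \<in> Hom (C n) (Fo H)"
  by (rule finite_biproduct.proj_closed[OF biproduct_level_set])

lemma covers_level_set: "cov H H' \<Longrightarrow> H \<in> level_set P n \<Longrightarrow> H' \<in> level_set P (Suc n)"
  using covers_level_Suc[OF digraph faithful, of H H'] by (auto simp: level_set_def covers_in_def)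

lemma covers_Fo_closed [simp]: "cov H H' \<Longrightarrow> Fo H \<in> Ob" "cov H H' \<Longrightarrow> Fo H' \<in> Ob"
  by (simp_all add: covers_in_def)

lemma signed_map_closed [intro]: "cov H H' \<Longrightarrow> s H H' \<in> Hom (Fo H) (Fo H')"
  using functoriality
  by (intro signed_closed) (auto simp: poset_functor_def covers_in_def subgraph_lt_def)

lemma differential_comp_iota:
  assumes H: "H \<in> level_set P n"
  shows "cmp (d n) (iota n H)
    = hsum (Fo H) (C (Suc n)) (\<lambda>H'. cmp (iota (Suc n) H') (s H H')) {H'. cov H H'}"
proof -
  define col where
    "col H = hsum (Fo H) (C (Suc n)) (\<lambda>H'. cmp (iota (Suc n) H') (s H H')) {H'. cov H H'}" for H
  have col_closed: "col H \<in> Hom (Fo H) (C (Suc n))" if "H \<in> level_set P n" for H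
    unfolding col_def using that by (intro homsum_closed) (auto intro!: comp_closed covers_level_set)
  have "d n = hsum (C n) (C (Suc n)) (\<lambda>H. cmp (col H) (proj n H)) (level_set P n)"
    unfolding differential_def
  proof (intro homsum_cong)
    fix H assume H: "H \<in> level_set P n"
    have "cmp (col H) (proj n H) = hsum (C n) (C (Suc n))
        (\<lambda>H'. cmp (cmp (iota (Suc n) H') (s H H')) (proj n H)) {H'. cov H H'}"
      unfolding col_def using H
      by (intro comp_homsum_right) (auto intro!: comp_closed covers_level_set)
    also have "\<dots> = hsum (C n) (C (Suc n))
        (\<lambda>H'. cmp (iota (Suc n) H') (cmp (s H H') (proj n H))) {H'. cov H H'}"
      using H
      by (intro homsum_cong comp_assoc[symmetric]) (auto intro!: comp_closed covers_level_set)
    finally show "hsum (C n) (C (Suc n))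
        (\<lambda>H'. cmp (iota (Suc n) H') (cmp (s H H') (proj n H))) {H'. cov H H'}
      = cmp (col H) (proj n H)" ..
  qed (auto intro!: comp_closed col_closed)
  then show ?thesis
    using finite_biproduct.homsum_comp_iota[OF biproduct_level_set H] col_closed
    by (simp add: col_def)
qed

lemma differential_closed: "d n \<in> Hom (C n) (C (Suc n))"
  unfolding differential_def
  by (intro homsum_closed) (auto intro!: comp_closed covers_level_set)

lemma differential_entry:
  assumes "H \<in> level_set P n" "K \<in> level_set P (Suc n)"
  shows "cmp (proj (Suc n) K) (cmp (d n) (iota n H))
    = (if cov H K then s H K else zr (Fo H) (Fo K))"
proof -
  have "{H'. cov H H'} \<subseteq> level_set P (Suc n)"
    using assms(1) covers_level_set by blast
  then have "cmp (proj (Suc n) K)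
      (hsum (Fo H) (C (Suc n)) (\<lambda>H'. cmp (iota (Suc n) H') (s H H')) {H'. cov H H'})
      = (if K \<in> {H'. cov H H'} then s H K else zr (Fo H) (Fo K))"
    using assms by (intro finite_biproduct.proj_comp_homsum[OF biproduct_level_set]) auto
  then show ?thesis by (simp add: differential_comp_iota[OF assms(1)])
qed

lemma signed_paths_cancel:
  assumes "H \<in> P" "K \<in> P"
  shows "hsum (Fo H) (Fo K) (\<lambda>H'. cmp (s H' K) (s H H')) {H'. cov H H' \<and> cov H' K}
    = zr (Fo H) (Fo K)"
proof (cases "\<exists>y. cov H y \<and> cov y K")
  case False
  then show ?thesis using assms by (intro homsum_zero) auto
next
  case True
  then obtain y where y: "cov H y" "cov y K" by blast
  then obtain y' where "y' \<noteq> y" and paths: "{H'. cov H H' \<and> cov H' K} = {y, y'}"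
    using squared_middle_pair[OF squared] by blast
  then have y': "cov H y'" "cov y' K" by auto
  have "subgraph_le H K"
    using y by (auto simp: covers_in_def subgraph_lt_def subgraph_le_def)
  then have Fm_HK: "Fm H K \<in> Hom (Fo H) (Fo K)"
    using assms functoriality by (simp add: poset_functor_def)
  have composite: "cmp (s H' K) (s H H') = sgn (Fo H) (Fo K) (eps H' K + eps H H') (Fm H K)"
    if "cov H H'" "cov H' K" for H'
  proof -
    have "cmp (Fm H' K) (Fm H H') = Fm H K"
      using that functoriality by (auto simp: poset_functor_def covers_in_def subgraph_lt_def)
    then show ?thesis
      using that functoriality
      by (auto simp: comp_signed poset_functor_def covers_in_def subgraph_lt_def)
  qed
  have signs: "eps y K + eps H y = (eps y' K + eps H y') + 1"
    using sign_assignment y y' \<open>y' \<noteq> y\<close> unfolding sign_assignment_def by (metis add.commute)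
  have "hsum (Fo H) (Fo K) (\<lambda>H'. cmp (s H' K) (s H H')) {y, y'}
      = ad (cmp (s y K) (s H y)) (cmp (s y' K) (s H y'))"
    using \<open>y' \<noteq> y\<close> y y' by (intro homsum_pair) (auto intro!: comp_closed)
  also have "\<dots> = ad (sgn (Fo H) (Fo K) ((eps y' K + eps H y') + 1) (Fm H K))
      (sgn (Fo H) (Fo K) (eps y' K + eps H y') (Fm H K))"
    by (simp only: composite[OF y] composite[OF y'] signs)
  also have "\<dots> = zr (Fo H) (Fo K)"
    using assms Fm_HK by (intro signed_opposite_cancel) auto
  finally show ?thesis using paths by simp
qed

lemma differential_square_entry:
  assumes H: "H \<in> level_set P n" and K: "K \<in> level_set P (Suc (Suc n))"
  shows "cmp (proj (Suc (Suc n)) K) (cmp (cmp (d (Suc n)) (d n)) (iota n H)) = zr (Fo H) (Fo K)"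
proof -
  let ?paths = "{H'. cov H H' \<and> cov H' K}"
  have "cmp (proj (Suc (Suc n)) K) (cmp (cmp (d (Suc n)) (d n)) (iota n H))
      = hsum (Fo H) (Fo K)
          (\<lambda>H'. cmp (cmp (proj (Suc (Suc n)) K) (cmp (d (Suc n)) (iota (Suc n) H')))
            (cmp (proj (Suc n) H') (cmp (d n) (iota n H))))
          (level_set P (Suc n))"
    using H K by (intro finite_biproduct.comp_entry_homsum[OF biproduct_level_set])
      (auto intro: differential_closed)
  also have "\<dots> = hsum (Fo H) (Fo K)
      (\<lambda>H'. if H' \<in> ?paths then cmp (s H' K) (s H H') else zr (Fo H) (Fo K)) (level_set P (Suc n))"
  proof (intro homsum_cong)
    fix H' assume H': "H' \<in> level_set P (Suc n)"
    have zero_comp: "cmp (zr (Fo H') (Fo K)) f = zr (Fo H) (Fo K)"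
      if "f \<in> Hom (Fo H) (Fo H')" for f
      using that H H' K by (intro comp_zero_right) auto
    have comp_zero: "cmp g (zr (Fo H) (Fo H')) = zr (Fo H) (Fo K)"
      if "g \<in> Hom (Fo H') (Fo K)" for g
      using that H H' K by (intro comp_zero_left) auto
    show "cmp (cmp (proj (Suc (Suc n)) K) (cmp (d (Suc n)) (iota (Suc n) H')))
          (cmp (proj (Suc n) H') (cmp (d n) (iota n H)))
        = (if H' \<in> ?paths then cmp (s H' K) (s H H') else zr (Fo H) (Fo K))"
      using H H' K zero_comp comp_zero zero_closed[of "Fo H" "Fo H'"]
      by (auto simp: differential_entry)
  qed (use H K in \<open>auto intro!: comp_closed\<close>)
  also have "\<dots> = hsum (Fo H) (Fo K) (\<lambda>H'. cmp (s H' K) (s H H')) ?paths"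
  proof (intro homsum_restrict finite_biproduct.finite_index[OF biproduct_level_set])
    show "?paths \<subseteq> level_set P (Suc n)"
      using H covers_level_set by blast
  qed (use H K in \<open>auto intro!: comp_closed\<close>)
  also have "\<dots> = zr (Fo H) (Fo K)"
    using H K by (intro signed_paths_cancel) (auto simp: level_set_def)
  finally show ?thesis .
qed

lemma differential_comp_differential: "cmp (d (Suc n)) (d n) = zr (C n) (C (Suc (Suc n)))"
proof (rule finite_biproduct.hom_from_biproduct_eqI[OF biproduct_level_set])
  fix H assume H: "H \<in> level_set P n"
  show "cmp (cmp (d (Suc n)) (d n)) (iota n H) = cmp (zr (C n) (C (Suc (Suc n)))) (iota n H)"
  proof (rule finite_biproduct.hom_into_biproduct_eqI[OF biproduct_level_set])
    fix K assume K: "K \<in> level_set P (Suc (Suc n))"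
    have "cmp (proj (Suc (Suc n)) K) (cmp (zr (C n) (C (Suc (Suc n)))) (iota n H))
        = zr (Fo H) (Fo K)"
      using H K
      by (simp add: comp_zero_right[of _ "Fo H" "C n"] comp_zero_left[of _ _ _ "Fo H"]
          iota_closed proj_closed)
    then show "cmp (proj (Suc (Suc n)) K) (cmp (cmp (d (Suc n)) (d n)) (iota n H))
        = cmp (proj (Suc (Suc n)) K) (cmp (zr (C n) (C (Suc (Suc n)))) (iota n H))"
      using differential_square_entry[OF H K] by simp
  qed (use H in \<open>auto intro!: comp_closed differential_closed\<close>)
qed (auto intro!: comp_closed differential_closed)

end

theorem theorem3p7:
  fixes G :: "'v digraph" and P :: "'v digraph set"
    and Ob :: "'o set" and Hom :: "'o \<Rightarrow> 'o \<Rightarrow> 'm set" and cmp :: "'m \<Rightarrow> 'm \<Rightarrow> 'm"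
    and idm :: "'o \<Rightarrow> 'm" and ad :: "'m \<Rightarrow> 'm \<Rightarrow> 'm" and zr :: "'o \<Rightarrow> 'o \<Rightarrow> 'm"
    and eps :: "'v digraph \<Rightarrow> 'v digraph \<Rightarrow> bit"
    and Fo :: "'v digraph \<Rightarrow> 'o" and Fm :: "'v digraph \<Rightarrow> 'v digraph \<Rightarrow> 'm"
    and C :: "nat \<Rightarrow> 'o" and iota :: "nat \<Rightarrow> 'v digraph \<Rightarrow> 'm" and proj :: "nat \<Rightarrow> 'v digraph \<Rightarrow> 'm"
  assumes "additive_category Ob Hom cmp idm ad zr"
    and "is_digraph G"
    and "faithful G P" and "squared P"
    and "sign_assignment P eps"
    and "poset_functor P Ob Hom cmp idm Fo Fm"
    and "\<forall>n. C n \<in> Ob \<and> is_biproduct Hom cmp idm ad zr (level_set P n) Fo (C n) (iota n) (proj n)"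
  shows "\<forall>n. cmp (differential P Hom cmp ad zr eps Fo Fm C iota proj (Suc n))
                   (differential P Hom cmp ad zr eps Fo Fm C iota proj n)
             = zr (C n) (C (Suc (Suc n)))"
proof -
  have "is_preadditive Ob Hom cmp idm ad zr"
    using assms(1) by (simp add: additive_category_def)
  then interpret subgraph_poset_complex Ob Hom cmp idm ad zr G P eps Fo Fm C iota proj
    using assms(2-7) by unfold_locales auto
  show ?thesis using differential_comp_differential by blast
qed

end
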